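(* Let $k,l,m$ be pairwise distinct complex parameters and $J,\widetilde J,\widehat J$ pairwise commuting invertible constant $N\times N$ matrices, with variables $\xi^J_k,\xi^{\widetilde J}_l,\xi^{\widehat J}_m$ and $N\times N$ matrix fields $H_{kl},H_{lk},H_{lm},H_{ml},H_{km},H_{mk}$. Define \begin{align*} \mathcal L_{klm}=&\tfrac12\operatorname{tr}\Big\{H_{ml}\widetilde J(\partial^J_kH_{lm})\widehat J-(\partial^J_kH_{ml})\widetilde JH_{lm}\widehat J+H_{km}\widehat J(\partial^{\widetilde J}_lH_{mk})J-(\partial^{\widetilde J}_lH_{km})\widehat JH_{mk}J\\ &\qquad+H_{lk}J(\partial^{\widehat J}_mH_{kl})\widetilde J-(\partial^{\widehat J}_mH_{lk})JH_{kl}\widetilde J\Big\}\\ &+\operatorname{tr}\Big\{H_{ml}\widetilde JH_{lm}\frac{J\widehat J}{k-m}-H_{ml}\frac{\widetilde JJ}{k-l}H_{lm}\widehat J+H_{km}\widehat JH_{mk}\frac{\widetilde JJ}{l-k}-H_{km}\frac{\widehat J\widetilde J}{l-m}H_{mk}J\\ &\qquad+H_{lk}JH_{kl}\frac{\widehat J\widetilde J}{m-l}-H_{lk}\frac{\widehat JJ}{m-k}H_{kl}\widetilde J\Big\} +\operatorname{tr}\Big\{H_{lm}\widehat JH_{mk}JH_{kl}\widetilde J-H_{ml}\widetilde JH_{lk}JH_{km}\widehat J\Big\}. \end{align*} Then the Euler–Lagrange equations of $\mathcal L_{klm}$ with respect to the six fields are equivalent to the six equations $$\partial^J_kH_{lm}=\tfrac{J}{k-l}H_{lm}-H_{lm}\tfrac{J}{k-m}+H_{lk}JH_{km},\qquad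 \partial^J_kH_{ml}=\tfrac{J}{k-m}H_{ml}-H_{ml}\tfrac{J}{k-l}+H_{mk}JH_{kl},$$ $$\partial^{\widetilde J}_lH_{mk}=\tfrac{\widetilde J}{l-m}H_{mk}-H_{mk}\tfrac{\widetilde J}{l-k}+H_{ml}\widetilde JH_{lk},\qquad \partial^{\widetilde J}_lH_{km}=\tfrac{\widetilde J}{l-k}H_{km}-H_{km}\tfrac{\widetilde J}{l-m}+H_{kl}\widetilde JH_{lm},$$ $$\partial^{\widehat J}_mH_{kl}=\tfrac{\widehat J}{m-k}H_{kl}-H_{kl}\tfrac{\widehat J}{m-l}+H_{km}\widehat JH_{ml},\qquad \partial^{\widehat J}_mH_{lk}=\tfrac{\widehat J}{m-l}H_{lk}-H_{lk}\tfrac{\widehat J}{m-k}+H_{lm}\widehat JH_{mk}.$$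
   Context: $\partial^J_k=\partial/\partial\xi^J_k$ etc.; $\operatorname{tr}$ is the matrix trace; the Euler–Lagrange equations are the standard ones for a Lagrangian density in the three independent variables $\xi^J_k,\xi^{\widetilde J}_l,\xi^{\widehat J}_m$, obtained by varying each matrix entry of each field independently. *)

theory Defs
  imports "HOL-Analysis.Analysis"
begin

text \<open>The six matrix fields and the three independent variables
  (Dk = xi^J_k, Dl = xi^{J~}_l, Dm = xi^{J^}_m).\<close>
datatype fld = Hkl | Hlk | Hlm | Hml | Hkm | Hmk
datatype dir = Dk | Dl | Dm

type_synonym 'n cmat = "complex^('n::finite)^'n"

definition mdiv :: "('n::finite) cmat \<Rightarrow> complex \<Rightarrow> ('n::finite) cmat" where
  "mdiv A c = (\<chi> i j. A$i$j / c)"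

definition pd :: "((dir \<Rightarrow> real) \<Rightarrow> 'a::real_normed_vector) \<Rightarrow> (dir \<Rightarrow> real) \<Rightarrow> dir \<Rightarrow> 'a" where
  "pd F \<xi> d = vector_derivative (\<lambda>t. F (\<xi>(d := t))) (at (\<xi> d))"

text \<open>The Lagrangian density as a function of the jet: field values u and
  first derivatives du d f = partial derivative of field f in direction d.\<close>
definition Lag :: "complex \<Rightarrow> complex \<Rightarrow> complex \<Rightarrow> ('n::finite) cmat \<Rightarrow> ('n::finite) cmat \<Rightarrow> ('n::finite) cmat
    \<Rightarrow> (fld \<Rightarrow> ('n::finite) cmat) \<Rightarrow> (dir \<Rightarrow> fld \<Rightarrow> ('n::finite) cmat) \<Rightarrow> complex" where
  "Lag k l m J Jt Jh u du =
     (1/2) * trace (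
         u Hml ** Jt ** du Dk Hlm ** Jh - du Dk Hml ** Jt ** u Hlm ** Jh
       + u Hkm ** Jh ** du Dl Hmk ** J - du Dl Hkm ** Jh ** u Hmk ** J
       + u Hlk ** J ** du Dm Hkl ** Jt - du Dm Hlk ** J ** u Hkl ** Jt)
   + trace (
         u Hml ** Jt ** u Hlm ** mdiv (J ** Jh) (k - m)
       - u Hml ** mdiv (Jt ** J) (k - l) ** u Hlm ** Jh
       + u Hkm ** Jh ** u Hmk ** mdiv (Jt ** J) (l - k)
       - u Hkm ** mdiv (Jh ** Jt) (l - m) ** u Hmk ** J
       + u Hlk ** J ** u Hkl ** mdiv (Jh ** Jt) (m - l)
       - u Hlk ** mdiv (Jh ** J) (m - k) ** u Hkl ** Jt)
   + trace (u Hlm ** Jh ** u Hmk ** J ** u Hkl ** Jt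
          - u Hml ** Jt ** u Hlk ** J ** u Hkm ** Jh)"

definition pert :: "('n::finite) cmat \<Rightarrow> 'n \<Rightarrow> 'n \<Rightarrow> complex \<Rightarrow> ('n::finite) cmat" where
  "pert A i j t = (\<chi> a b. if a = i \<and> b = j then A$a$b + t else A$a$b)"

definition dL_du :: "((fld \<Rightarrow> ('n::finite) cmat) \<Rightarrow> (dir \<Rightarrow> fld \<Rightarrow> ('n::finite) cmat) \<Rightarrow> complex)
    \<Rightarrow> fld \<Rightarrow> 'n \<Rightarrow> 'n \<Rightarrow> (fld \<Rightarrow> ('n::finite) cmat) \<Rightarrow> (dir \<Rightarrow> fld \<Rightarrow> ('n::finite) cmat) \<Rightarrow> complex" where
  "dL_du L f i j u du = deriv (\<lambda>t. L (u(f := pert (u f) i j t)) du) 0"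

definition dL_ddu :: "((fld \<Rightarrow> ('n::finite) cmat) \<Rightarrow> (dir \<Rightarrow> fld \<Rightarrow> ('n::finite) cmat) \<Rightarrow> complex)
    \<Rightarrow> dir \<Rightarrow> fld \<Rightarrow> 'n \<Rightarrow> 'n \<Rightarrow> (fld \<Rightarrow> ('n::finite) cmat) \<Rightarrow> (dir \<Rightarrow> fld \<Rightarrow> ('n::finite) cmat) \<Rightarrow> complex" where
  "dL_ddu L d f i j u du = deriv (\<lambda>t. L u (du(d := (du d)(f := pert (du d f) i j t)))) 0"

definition EL :: "((fld \<Rightarrow> ('n::finite) cmat) \<Rightarrow> (dir \<Rightarrow> fld \<Rightarrow> ('n::finite) cmat) \<Rightarrow> complex)
    \<Rightarrow> (fld \<Rightarrow> (dir \<Rightarrow> real) \<Rightarrow> ('n::finite) cmat) \<Rightarrow> fld \<Rightarrow> 'n \<Rightarrow> 'n \<Rightarrow> (dir \<Rightarrow> real) \<Rightarrow> bool" where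
  "EL L H f i j \<xi> \<longleftrightarrow>
     dL_du L f i j (\<lambda>g. H g \<xi>) (\<lambda>d g. pd (H g) \<xi> d)
     - (\<Sum>d\<in>UNIV. pd (\<lambda>\<zeta>. dL_ddu L d f i j (\<lambda>g. H g \<zeta>) (\<lambda>d' g. pd (H g) \<zeta> d')) \<xi> d) = 0"

end

theory Submission
  imports Defs
begin

text \<open>
  Every trace term of the Lagrangian contains each field, and each derivative of a field, at
  most once. So \<open>L\<close> is affine in every matrix entry of the jet, and by \<open>tr (E_ij B) = B_ji\<close>
  its partial derivatives are entries of explicit matrices; the momenta are linear in the fields,
  so the Euler--Lagrange expressions involve only first derivatives of \<open>H\<close>. For \<open>H_ml\<close> the
  expression is \<open>Jt (\<partial>_k H_lm - F_lm) Jh\<close>, where \<open>F_lm\<close> is the prescribed right-hand side: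
  the two halves of the kinetic term add up, and since \<open>J, Jt, Jh\<close> commute the potential terms
  factor. Invertibility of \<open>Jt\<close> and \<open>Jh\<close> yields the flow of \<open>H_lm\<close>; the other five fields
  behave alike.
\<close>

definition matrix_unit :: "'m \<Rightarrow> 'n \<Rightarrow> 'a::zero_neq_one^'n^'m" where
  "matrix_unit i j = (\<chi> a b. if a = i \<and> b = j then 1 else 0)"

definition smult_matrix :: "'a::times \<Rightarrow> 'a^'n^'m \<Rightarrow> 'a^'n^'m" where
  "smult_matrix c A = (\<chi> a b. c * A $ a $ b)"

lemma smult_matrix_nth [simp]: "smult_matrix c A $ a $ b = c * A $ a $ b"
  by (simp add: smult_matrix_def)

lemma pert_eq_add_smult_matrix: "pert A i j t = A + smult_matrix t (matrix_unit i j)"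
  by (simp add: pert_def matrix_unit_def vec_eq_iff)

lemma mdiv_eq_smult_matrix: "mdiv A c = smult_matrix (1 / c) A"
  by (simp add: mdiv_def vec_eq_iff)

lemma matrix_mult_nth:
  fixes A :: "'a::semiring_1^'k::finite^'m" and B :: "'a^'n^'k"
  shows "(A ** B) $ a $ b = (\<Sum>c\<in>UNIV. A $ a $ c * B $ c $ b)"
  by (simp add: matrix_matrix_mult_def)

lemma smult_matrix_matrix_mult:
  fixes A :: "'a::semiring_1^'k::finite^'m" and B :: "'a^'n^'k"
  shows "smult_matrix c A ** B = smult_matrix c (A ** B)"
  by (simp add: vec_eq_iff matrix_mult_nth sum_distrib_left mult.assoc)

lemma matrix_mult_smult_matrix:
  fixes A :: "'a::comm_semiring_1^'k::finite^'m" and B :: "'a^'n^'k"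
  shows "A ** smult_matrix c B = smult_matrix c (A ** B)"
  by (simp add: vec_eq_iff matrix_mult_nth sum_distrib_left algebra_simps)

lemma smult_matrix_smult_matrix:
  "smult_matrix c (smult_matrix d (A :: 'a::semigroup_mult^'n^'m)) = smult_matrix (c * d) A"
  by (simp add: vec_eq_iff mult.assoc)

lemma smult_matrix_add: "smult_matrix c (A + B :: 'a::semiring^'n^'m) = smult_matrix c A + smult_matrix c B"
  by (simp add: vec_eq_iff algebra_simps)

lemma smult_matrix_diff: "smult_matrix c (A - B :: 'a::ring^'n^'m) = smult_matrix c A - smult_matrix c B"
  by (simp add: vec_eq_iff algebra_simps)

lemma trace_smult_matrix: "trace (smult_matrix c (A :: 'a::semiring_1^'n::finite^'n)) = c * trace A"
  by (simp add: trace_def sum_distrib_left)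

lemma matrix_add_rdistrib:
  fixes A B :: "'a::semiring_1^'k::finite^'m" and C :: "'a^'n^'k"
  shows "(A + B) ** C = A ** C + B ** C"
  by (simp add: vec_eq_iff matrix_mult_nth algebra_simps sum.distrib)

lemma matrix_diff_rdistrib:
  fixes A B :: "'a::ring_1^'k::finite^'m" and C :: "'a^'n^'k"
  shows "(A - B) ** C = A ** C - B ** C"
  by (simp add: vec_eq_iff matrix_mult_nth algebra_simps sum_subtractf)

lemma matrix_diff_ldistrib:
  fixes A B :: "'a::ring_1^'n^'k" and C :: "'a^'k::finite^'m"
  shows "C ** (A - B) = C ** A - C ** B"
  by (simp add: vec_eq_iff matrix_mult_nth algebra_simps sum_subtractf)

lemma matrix_mult_minus_left:
  fixes A :: "'a::ring_1^'k::finite^'m" and C :: "'a^'n^'k"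
  shows "(- A) ** C = - (A ** C)"
  by (simp add: vec_eq_iff matrix_mult_nth sum_negf)

lemma matrix_mult_minus_right:
  fixes A :: "'a::ring_1^'n^'k" and C :: "'a^'k::finite^'m"
  shows "C ** (- A) = - (C ** A)"
  by (simp add: vec_eq_iff matrix_mult_nth sum_negf)

lemma trace_matrix_unit_mult:
  fixes B :: "'a::semiring_1^'n::finite^'n"
  shows "trace (matrix_unit i j ** B) = B $ j $ i"
proof -
  have "(\<Sum>c\<in>UNIV. matrix_unit i j $ a $ c * B $ c $ a) = (if a = i then B $ j $ a else 0)" for a
    by (simp add: matrix_unit_def if_distrib if_distribR cong: if_cong)
  then show ?thesis
    by (simp add: trace_def matrix_mult_nth)
qed

lemma trace_mult_matrix_unit_mult:
  fixes A B :: "'a::comm_semiring_1^'n::finite^'n"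
  shows "trace (A ** (matrix_unit i j ** B)) = (B ** A) $ j $ i"
  by (metis trace_matrix_unit_mult trace_mul_sym matrix_mul_assoc)

text \<open>Products are normalised to the right, so the matrix unit may sit behind several factors.\<close>

lemma trace_mult_matrix_unit_mult_nested:
  fixes A1 A2 A3 A4 B :: "'a::comm_semiring_1^'n::finite^'n"
  shows "trace (A1 ** (A2 ** (matrix_unit i j ** B))) = (B ** (A1 ** A2)) $ j $ i"
    and "trace (A1 ** (A2 ** (A3 ** (matrix_unit i j ** B)))) = (B ** (A1 ** (A2 ** A3))) $ j $ i"
    and "trace (A1 ** (A2 ** (A3 ** (A4 ** (matrix_unit i j ** B)))))
      = (B ** (A1 ** (A2 ** (A3 ** A4)))) $ j $ i"
  using trace_mult_matrix_unit_mult[of "A1 ** A2"] trace_mult_matrix_unit_mult[of "A1 ** A2 ** A3"]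
    trace_mult_matrix_unit_mult[of "A1 ** A2 ** A3 ** A4"]
  by (simp_all only: matrix_mul_assoc)

lemmas matrix_expand_simps =
  pert_eq_add_smult_matrix mdiv_eq_smult_matrix smult_matrix_matrix_mult matrix_mult_smult_matrix
  smult_matrix_smult_matrix smult_matrix_add smult_matrix_diff matrix_add_rdistrib matrix_add_ldistrib
  matrix_diff_rdistrib matrix_diff_ldistrib matrix_mult_minus_left matrix_mult_minus_right
  matrix_mul_assoc[symmetric] trace_add trace_sub trace_smult_matrix trace_matrix_unit_mult
  trace_mult_matrix_unit_mult trace_mult_matrix_unit_mult_nested

fun euler_lagrange_gradient :: "complex \<Rightarrow> complex \<Rightarrow> complex \<Rightarrow> ('n::finite) cmat \<Rightarrow> 'n cmat \<Rightarrow> 'n cmat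
    \<Rightarrow> fld \<Rightarrow> (fld \<Rightarrow> 'n cmat) \<Rightarrow> (dir \<Rightarrow> fld \<Rightarrow> 'n cmat) \<Rightarrow> 'n cmat" where
  "euler_lagrange_gradient k l m J Jt Jh Hml u du =
     smult_matrix (1/2) (Jt ** du Dk Hlm ** Jh) + Jt ** u Hlm ** mdiv (J ** Jh) (k - m)
     - mdiv (Jt ** J) (k - l) ** u Hlm ** Jh - Jt ** u Hlk ** J ** u Hkm ** Jh"
| "euler_lagrange_gradient k l m J Jt Jh Hlm u du =
     smult_matrix (-1/2) (Jh ** du Dk Hml ** Jt) + mdiv (J ** Jh) (k - m) ** u Hml ** Jt
     - Jh ** u Hml ** mdiv (Jt ** J) (k - l) + Jh ** u Hmk ** J ** u Hkl ** Jt"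
| "euler_lagrange_gradient k l m J Jt Jh Hkm u du =
     smult_matrix (1/2) (Jh ** du Dl Hmk ** J) + Jh ** u Hmk ** mdiv (Jt ** J) (l - k)
     - mdiv (Jh ** Jt) (l - m) ** u Hmk ** J - Jh ** u Hml ** Jt ** u Hlk ** J"
| "euler_lagrange_gradient k l m J Jt Jh Hmk u du =
     smult_matrix (-1/2) (J ** du Dl Hkm ** Jh) + mdiv (Jt ** J) (l - k) ** u Hkm ** Jh
     - J ** u Hkm ** mdiv (Jh ** Jt) (l - m) + J ** u Hkl ** Jt ** u Hlm ** Jh"
| "euler_lagrange_gradient k l m J Jt Jh Hlk u du =
     smult_matrix (1/2) (J ** du Dm Hkl ** Jt) + J ** u Hkl ** mdiv (Jh ** Jt) (m - l)
     - mdiv (Jh ** J) (m - k) ** u Hkl ** Jt - J ** u Hkm ** Jh ** u Hml ** Jt"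
| "euler_lagrange_gradient k l m J Jt Jh Hkl u du =
     smult_matrix (-1/2) (Jt ** du Dm Hlk ** J) + mdiv (Jh ** Jt) (m - l) ** u Hlk ** J
     - Jt ** u Hlk ** mdiv (Jh ** J) (m - k) + Jt ** u Hlm ** Jh ** u Hmk ** J"

fun momentum :: "('n::finite) cmat \<Rightarrow> 'n cmat \<Rightarrow> 'n cmat \<Rightarrow> dir \<Rightarrow> fld \<Rightarrow> (fld \<Rightarrow> 'n cmat) \<Rightarrow> 'n cmat" where
  "momentum J Jt Jh Dk Hlm u = smult_matrix (1/2) (Jh ** u Hml ** Jt)"
| "momentum J Jt Jh Dk Hml u = smult_matrix (-1/2) (Jt ** u Hlm ** Jh)"
| "momentum J Jt Jh Dl Hmk u = smult_matrix (1/2) (J ** u Hkm ** Jh)"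
| "momentum J Jt Jh Dl Hkm u = smult_matrix (-1/2) (Jh ** u Hmk ** J)"
| "momentum J Jt Jh Dm Hkl u = smult_matrix (1/2) (Jt ** u Hlk ** J)"
| "momentum J Jt Jh Dm Hlk u = smult_matrix (-1/2) (J ** u Hkl ** Jt)"
| "momentum J Jt Jh _ _ u = 0"

lemma Lag_pert_field:
  "Lag k l m J Jt Jh (u(f := pert (u f) i j t)) du
     = Lag k l m J Jt Jh u du + t * euler_lagrange_gradient k l m J Jt Jh f u du $ j $ i"
  by (cases f) (simp_all add: Lag_def matrix_expand_simps algebra_simps)

lemma Lag_pert_jet:
  "Lag k l m J Jt Jh u (du(d := (du d)(f := pert (du d f) i j t)))
     = Lag k l m J Jt Jh u du + t * momentum J Jt Jh d f u $ j $ i"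
  by (cases d; cases f) (simp_all add: Lag_def matrix_expand_simps algebra_simps)

lemma deriv_affine: "deriv (\<lambda>t::complex. a + t * b) 0 = b"
  by (rule DERIV_imp_deriv) (auto intro!: derivative_eq_intros)

lemma dL_du_Lag:
  "dL_du (Lag k l m J Jt Jh) f i j u du = euler_lagrange_gradient k l m J Jt Jh f u du $ j $ i"
  unfolding dL_du_def Lag_pert_field by (rule deriv_affine)

lemma dL_ddu_Lag: "dL_ddu (Lag k l m J Jt Jh) d f i j u du = momentum J Jt Jh d f u $ j $ i"
  unfolding dL_ddu_def Lag_pert_jet by (rule deriv_affine)

lemma pd_bounded_linear:
  fixes F :: "(dir \<Rightarrow> real) \<Rightarrow> 'a::real_normed_vector"
  assumes "bounded_linear L" and "(\<lambda>t. F (\<xi>(d := t))) differentiable (at (\<xi> d))"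
  shows "pd (\<lambda>\<zeta>. L (F \<zeta>)) \<xi> d = L (pd F \<xi> d)"
proof -
  have "((\<lambda>t. F (\<xi>(d := t))) has_vector_derivative pd F \<xi> d) (at (\<xi> d))"
    unfolding pd_def using assms(2) by (rule vector_derivative_works[THEN iffD1])
  from bounded_linear.has_vector_derivative[OF assms(1) this]
  show ?thesis
    unfolding pd_def by (rule vector_derivative_at)
qed

lemma bounded_linear_matrix_nth:
  "bounded_linear (\<lambda>X::'a::real_normed_vector^'n::finite^'m::finite. X $ a $ b)"
  using bounded_linear_compose[OF bounded_linear_vec_nth bounded_linear_vec_nth] .

lemma bounded_linear_smult_matrix_sandwich_nth:
  fixes A :: "'a::real_normed_algebra_1^'k::finite^'m::finite"
    and B :: "'a^'n::finite^'l::finite"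
  shows "bounded_linear (\<lambda>X::'a^'l^'k. smult_matrix c (A ** X ** B) $ j $ i)"
  unfolding smult_matrix_nth matrix_matrix_mult_def
  by (simp, intro bounded_linear_intros bounded_linear_matrix_nth)

fun fld_swap :: "fld \<Rightarrow> fld" where
  "fld_swap Hkl = Hlk" | "fld_swap Hlk = Hkl" | "fld_swap Hlm = Hml" | "fld_swap Hml = Hlm"
| "fld_swap Hkm = Hmk" | "fld_swap Hmk = Hkm"

lemma fld_swap_swap [simp]: "fld_swap (fld_swap f) = f"
  by (cases f) simp_all

lemma momentum_eq_swap: "momentum J Jt Jh d f u = momentum J Jt Jh d f (\<lambda>_. u (fld_swap f))"
  by (cases d; cases f) simp_all

lemma bounded_linear_momentum_nth: "bounded_linear (\<lambda>X. momentum J Jt Jh d f (\<lambda>_. X) $ j $ i)"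
  by (cases d; cases f)
    (simp_all only: momentum.simps zero_index bounded_linear_smult_matrix_sandwich_nth bounded_linear_zero)

lemma pd_momentum_nth:
  assumes "\<And>g \<xi> d. (\<lambda>t. H g (\<xi>(d := t))) differentiable (at (\<xi> d))"
  shows "pd (\<lambda>\<zeta>. momentum J Jt Jh d f (\<lambda>g. H g \<zeta>) $ j $ i) \<xi> d'
    = momentum J Jt Jh d f (\<lambda>g. pd (H g) \<xi> d') $ j $ i"
  using pd_bounded_linear[OF bounded_linear_momentum_nth assms]
  by (subst (1 2) momentum_eq_swap) simp

lemma EL_Lag_iff:
  assumes "\<And>g \<xi> d. (\<lambda>t. H g (\<xi>(d := t))) differentiable (at (\<xi> d))"
  shows "EL (Lag k l m J Jt Jh) H f i j \<xi> \<longleftrightarrow>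
    (euler_lagrange_gradient k l m J Jt Jh f (\<lambda>g. H g \<xi>) (\<lambda>d g. pd (H g) \<xi> d)
      - (\<Sum>d\<in>UNIV. momentum J Jt Jh d f (\<lambda>g. pd (H g) \<xi> d))) $ j $ i = 0"
  unfolding EL_def dL_du_Lag dL_ddu_Lag pd_momentum_nth[OF assms] by simp

fun flow_dir :: "fld \<Rightarrow> dir" where
  "flow_dir Hlm = Dk" | "flow_dir Hml = Dk" | "flow_dir Hmk = Dl" | "flow_dir Hkm = Dl"
| "flow_dir Hkl = Dm" | "flow_dir Hlk = Dm"

fun flow :: "complex \<Rightarrow> complex \<Rightarrow> complex \<Rightarrow> ('n::finite) cmat \<Rightarrow> 'n cmat \<Rightarrow> 'n cmat
    \<Rightarrow> fld \<Rightarrow> (fld \<Rightarrow> 'n cmat) \<Rightarrow> 'n cmat" where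
  "flow k l m J Jt Jh Hlm U = mdiv J (k - l) ** U Hlm - U Hlm ** mdiv J (k - m) + U Hlk ** J ** U Hkm"
| "flow k l m J Jt Jh Hml U = mdiv J (k - m) ** U Hml - U Hml ** mdiv J (k - l) + U Hmk ** J ** U Hkl"
| "flow k l m J Jt Jh Hmk U = mdiv Jt (l - m) ** U Hmk - U Hmk ** mdiv Jt (l - k) + U Hml ** Jt ** U Hlk"
| "flow k l m J Jt Jh Hkm U = mdiv Jt (l - k) ** U Hkm - U Hkm ** mdiv Jt (l - m) + U Hkl ** Jt ** U Hlm"
| "flow k l m J Jt Jh Hkl U = mdiv Jh (m - k) ** U Hkl - U Hkl ** mdiv Jh (m - l) + U Hkm ** Jh ** U Hml"
| "flow k l m J Jt Jh Hlk U = mdiv Jh (m - l) ** U Hlk - U Hlk ** mdiv Jh (m - k) + U Hlm ** Jh ** U Hmk"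

fun el_left :: "('n::finite) cmat \<Rightarrow> 'n cmat \<Rightarrow> 'n cmat \<Rightarrow> fld \<Rightarrow> 'n cmat" where
  "el_left J Jt Jh Hml = Jt" | "el_left J Jt Jh Hlm = - Jh"
| "el_left J Jt Jh Hkm = Jh" | "el_left J Jt Jh Hmk = - J"
| "el_left J Jt Jh Hlk = J" | "el_left J Jt Jh Hkl = - Jt"

fun el_right :: "('n::finite) cmat \<Rightarrow> 'n cmat \<Rightarrow> 'n cmat \<Rightarrow> fld \<Rightarrow> 'n cmat" where
  "el_right J Jt Jh Hml = Jh" | "el_right J Jt Jh Hlm = Jt"
| "el_right J Jt Jh Hkm = J" | "el_right J Jt Jh Hmk = Jh"
| "el_right J Jt Jh Hlk = Jt" | "el_right J Jt Jh Hkl = J"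

lemma UNIV_dir: "(UNIV :: dir set) = {Dk, Dl, Dm}"
  using dir.exhaust by auto

lemma sum_UNIV_dir: "(\<Sum>d\<in>UNIV. g d) = g Dk + g Dl + g Dm"
  by (simp add: UNIV_dir add.assoc)

lemma euler_lagrange_residual:
  fixes J Jt Jh :: "('n::finite) cmat"
  assumes "J ** Jt = Jt ** J" "J ** Jh = Jh ** J" "Jt ** Jh = Jh ** Jt"
  shows "euler_lagrange_gradient k l m J Jt Jh f U V - (\<Sum>d\<in>UNIV. momentum J Jt Jh d f (V d))
    = el_left J Jt Jh f ** (V (flow_dir (fld_swap f)) (fld_swap f) - flow k l m J Jt Jh (fld_swap f) U)
        ** el_right J Jt Jh f"
proof -
  have "J ** (Jt ** X) = Jt ** (J ** X)" "J ** (Jh ** X) = Jh ** (J ** X)"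
    "Jt ** (Jh ** X) = Jh ** (Jt ** X)" for X :: "'n cmat"
    using assms by (simp_all add: matrix_mul_assoc)
  with assms show ?thesis
    by (cases f; simp only: euler_lagrange_gradient.simps momentum.simps fld_swap.simps flow.simps
        flow_dir.simps el_left.simps el_right.simps sum_UNIV_dir matrix_expand_simps)
      (simp add: vec_eq_iff; simp add: algebra_simps)+
qed

lemma invertible_neg:
  fixes A :: "('n::finite) cmat"
  assumes "invertible A"
  shows "invertible (- A)"
  using scalar_invertible[of "-1" A] assms by simp

lemma invertible_el_factors:
  assumes "invertible J" "invertible Jt" "invertible Jh"
  shows "invertible (el_left J Jt Jh f)" "invertible (el_right J Jt Jh f)"
  using assms by (cases f; simp add: invertible_neg)+

lemma invertible_sandwich_eq_0:
  fixes P Q Y :: "'a::field^'n::finite^'n"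
  assumes "invertible P" "invertible Q"
  shows "P ** Y ** Q = 0 \<longleftrightarrow> Y = 0"
proof
  assume PYQ: "P ** Y ** Q = 0"
  obtain P' where "P' ** P = mat 1"
    using assms(1) invertible_left_inverse by blast
  moreover obtain Q' where "Q ** Q' = mat 1"
    using assms(2) invertible_right_inverse by blast
  ultimately have "Y = P' ** (P ** Y ** Q) ** Q'"
    by (metis matrix_mul_assoc matrix_mul_lid matrix_mul_rid)
  then show "Y = 0"
    using PYQ by simp
qed simp

lemma EL_Lag_entries_iff:
  fixes J Jt Jh :: "('n::finite) cmat"
  assumes "J ** Jt = Jt ** J" "J ** Jh = Jh ** J" "Jt ** Jh = Jh ** Jt"
    and "invertible J" "invertible Jt" "invertible Jh"
    and "\<And>g \<xi> d. (\<lambda>t. H g (\<xi>(d := t))) differentiable (at (\<xi> d))"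
  shows "(\<forall>i j. EL (Lag k l m J Jt Jh) H f i j \<xi>) \<longleftrightarrow>
    pd (H (fld_swap f)) \<xi> (flow_dir (fld_swap f)) = flow k l m J Jt Jh (fld_swap f) (\<lambda>g. H g \<xi>)"
proof -
  let ?Y = "pd (H (fld_swap f)) \<xi> (flow_dir (fld_swap f)) - flow k l m J Jt Jh (fld_swap f) (\<lambda>g. H g \<xi>)"
  have "(\<forall>i j. EL (Lag k l m J Jt Jh) H f i j \<xi>) \<longleftrightarrow> el_left J Jt Jh f ** ?Y ** el_right J Jt Jh f = 0"
    unfolding EL_Lag_iff[OF assms(7)] euler_lagrange_residual[OF assms(1-3)]
    by (auto simp: vec_eq_iff)
  also have "\<dots> \<longleftrightarrow> ?Y = 0"
    using invertible_sandwich_eq_0 invertible_el_factors[OF assms(4-6)] by blast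
  finally show ?thesis
    by simp
qed

lemma all_fld: "(\<forall>f. P f) \<longleftrightarrow> P Hlm \<and> P Hml \<and> P Hmk \<and> P Hkm \<and> P Hkl \<and> P Hlk"
  by (metis fld.exhaust)

theorem mainTheorem12:
  fixes k l m :: complex and J Jt Jh :: "('n::finite) cmat"
    and H :: "fld \<Rightarrow> (dir \<Rightarrow> real) \<Rightarrow> 'n cmat"
  assumes "k \<noteq> l" "l \<noteq> m" "k \<noteq> m"
    and "J ** Jt = Jt ** J" "J ** Jh = Jh ** J" "Jt ** Jh = Jh ** Jt"
    and "invertible J" "invertible Jt" "invertible Jh"
    and "\<And>f \<xi> d. (\<lambda>t. H f (\<xi>(d := t))) differentiable (at (\<xi> d))"
  shows "(\<forall>\<xi> f i j. EL (Lag k l m J Jt Jh) H f i j \<xi>) \<longleftrightarrow>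
    (\<forall>\<xi>. let D = (\<lambda>d f. pd (H f) \<xi> d); U = (\<lambda>f. H f \<xi>) in
       D Dk Hlm = mdiv J (k - l) ** U Hlm - U Hlm ** mdiv J (k - m) + U Hlk ** J ** U Hkm
     \<and> D Dk Hml = mdiv J (k - m) ** U Hml - U Hml ** mdiv J (k - l) + U Hmk ** J ** U Hkl
     \<and> D Dl Hmk = mdiv Jt (l - m) ** U Hmk - U Hmk ** mdiv Jt (l - k) + U Hml ** Jt ** U Hlk
     \<and> D Dl Hkm = mdiv Jt (l - k) ** U Hkm - U Hkm ** mdiv Jt (l - m) + U Hkl ** Jt ** U Hlm
     \<and> D Dm Hkl = mdiv Jh (m - k) ** U Hkl - U Hkl ** mdiv Jh (m - l) + U Hkm ** Jh ** U Hml
     \<and> D Dm Hlk = mdiv Jh (m - l) ** U Hlk - U Hlk ** mdiv Jh (m - k) + U Hlm ** Jh ** U Hmk)"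
proof -
  \<comment> \<open>\<open>k, l, m\<close> need not be distinct: the quotients by \<open>k - l\<close> etc. enter both sides alike.\<close>
  have "(\<forall>\<xi> f i j. EL (Lag k l m J Jt Jh) H f i j \<xi>) \<longleftrightarrow>
      (\<forall>\<xi> f. pd (H (fld_swap f)) \<xi> (flow_dir (fld_swap f))
        = flow k l m J Jt Jh (fld_swap f) (\<lambda>g. H g \<xi>))"
    using EL_Lag_entries_iff[where H = H, OF assms(4-10)] by blast
  also have "\<dots> \<longleftrightarrow> (\<forall>\<xi> g. pd (H g) \<xi> (flow_dir g) = flow k l m J Jt Jh g (\<lambda>g. H g \<xi>))"
    by (metis fld_swap_swap)
  finally show ?thesis
    unfolding all_fld by (simp only: flow.simps flow_dir.simps Let_def)
qed

end
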